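(* Let $n\ge2$. For any two polar $n$-complex numbers $u,u'$, $$|uu'|\le\sqrt n\,|u|\,|u'|,$$ where $|x_0+h_1x_1+\cdots+h_{n-1}x_{n-1}|=(x_0^2+\cdots+x_{n-1}^2)^{1/2}$. Consequently $|u^l|\le n^{(l-1)/2}|u|^l$ and $|au^l|\le n^{l/2}|a||u|^l$ for every natural number $l\ge1$ and polar $n$-complex $a,u$.
   Context: Polar $n$-complex numbers: $u=x_0+h_1x_1+\cdots+h_{n-1}x_{n-1}$, $x_j\in\mathbb{R}$, $h_0=1$, with componentwise addition and bilinear multiplication $h_jh_k=h_{(j+k)\bmod n}$. *)

theory Defs
  imports Complex_Main
begin

text \<open>A polar n-complex number x_0 + h_1 x_1 + ... + h_(n-1) x_(n-1) is represented by its
  coefficient function nat => real; only the coefficients at indices j < n are meaningful.\<close>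

definition pc_mult :: "nat \<Rightarrow> (nat \<Rightarrow> real) \<Rightarrow> (nat \<Rightarrow> real) \<Rightarrow> (nat \<Rightarrow> real)" where
  "pc_mult n u v = (\<lambda>k. \<Sum>i<n. \<Sum>j<n. if (i + j) mod n = k then u i * v j else 0)"

definition pc_one :: "nat \<Rightarrow> real" where
  "pc_one = (\<lambda>k. if k = 0 then 1 else 0)"

fun pc_pow :: "nat \<Rightarrow> (nat \<Rightarrow> real) \<Rightarrow> nat \<Rightarrow> (nat \<Rightarrow> real)" where
  "pc_pow n u 0 = pc_one"
| "pc_pow n u (Suc l) = pc_mult n u (pc_pow n u l)"

definition pc_abs :: "nat \<Rightarrow> (nat \<Rightarrow> real) \<Rightarrow> real" where
  "pc_abs n u = sqrt (\<Sum>j<n. (u j)\<^sup>2)"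

end

theory Submission
  imports Defs "HOL-Analysis.Convex"
begin

text \<open>For \<open>k < n\<close> the \<open>k\<close>-th coefficient of \<open>u v\<close> is \<open>\<Sum>\<^sub>i u\<^sub>i v\<^bsub>(k - i) mod n\<^esub>\<close>. Since
  \<open>i \<mapsto> (k - i) mod n\<close> permutes \<open>{0..<n}\<close>, Cauchy-Schwarz bounds its square by \<open>|u|\<^sup>2 |v|\<^sup>2\<close>,
  and summing over the \<open>n\<close> coefficients gives \<open>|u v|\<^sup>2 \<le> n |u|\<^sup>2 |v|\<^sup>2\<close>.\<close>

lemma mod_add_eq_iff_eq_mod_diff:
  fixes i j k n :: nat
  assumes "i < n" "j < n" "k < n"
  shows "(i + j) mod n = k \<longleftrightarrow> j = (n + k - i) mod n"
proof -
  define j' where "j' = (n + k - i) mod n"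
  have "(i + j') mod n = (i + (n + k - i)) mod n"
    unfolding j'_def by (simp add: mod_add_right_eq)
  also have "\<dots> = k"
    using assms by simp
  finally have "(i + j) mod n = k \<longleftrightarrow> (i + j) mod n = (i + j') mod n"
    by simp
  also have "\<dots> \<longleftrightarrow> j mod n = j' mod n"
    by (simp add: nat_mod_eq_iff)
  also have "\<dots> \<longleftrightarrow> j = j'"
    using assms(2,3) by (simp add: j'_def)
  finally show ?thesis
    unfolding j'_def .
qed

lemma bij_betw_mod_diff:
  fixes k n :: nat
  assumes "k < n"
  shows "bij_betw (\<lambda>i. (n + k - i) mod n) {..<n} {..<n}"
proof -
  let ?f = "\<lambda>i. (n + k - i) mod n"
  have f_less: "?f i < n" for i
    using assms by simp
  have f_involutive: "?f (?f i) = i" if "i < n" for i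
  proof -
    have "(i + ?f i) mod n = k"
      using mod_add_eq_iff_eq_mod_diff[OF that f_less assms] by simp
    then show ?thesis
      using mod_add_eq_iff_eq_mod_diff[OF f_less that assms] by (simp add: add.commute)
  qed
  show ?thesis
    by (rule bij_betw_byWitness[where f' = ?f]) (use f_less f_involutive in auto)
qed

lemma pc_mult_apply:
  assumes "k < n"
  shows "pc_mult n u v k = (\<Sum>i<n. u i * v ((n + k - i) mod n))"
  unfolding pc_mult_def
proof (rule sum.cong)
  fix i assume "i \<in> {..<n}"
  then have "(\<Sum>j<n. if (i + j) mod n = k then u i * v j else 0)
      = (\<Sum>j<n. if j = (n + k - i) mod n then u i * v j else 0)"
    using assms mod_add_eq_iff_eq_mod_diff by (intro sum.cong) auto
  also have "\<dots> = u i * v ((n + k - i) mod n)"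
    using assms by simp
  finally show "(\<Sum>j<n. if (i + j) mod n = k then u i * v j else 0) = u i * v ((n + k - i) mod n)" .
qed simp

lemma pc_mult_coeff_sq_le:
  assumes "k < n"
  shows "(pc_mult n u v k)\<^sup>2 \<le> (\<Sum>i<n. (u i)\<^sup>2) * (\<Sum>j<n. (v j)\<^sup>2)"
proof -
  have "(\<Sum>i<n. (v ((n + k - i) mod n))\<^sup>2) = (\<Sum>j<n. (v j)\<^sup>2)"
    using sum.reindex_bij_betw[OF bij_betw_mod_diff[OF assms], of "\<lambda>j. (v j)\<^sup>2"] by simp
  then show ?thesis
    using Cauchy_Schwarz_ineq_sum[of u "\<lambda>i. v ((n + k - i) mod n)" "{..<n}"]
    by (simp add: pc_mult_apply[OF assms])
qed

lemma pc_abs_nonneg: "pc_abs n u \<ge> 0"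
  unfolding pc_abs_def by (simp add: sum_nonneg)

lemma pc_abs_cong:
  assumes "\<And>k. k < n \<Longrightarrow> u k = v k"
  shows "pc_abs n u = pc_abs n v"
  unfolding pc_abs_def using assms by simp

lemma pc_abs_mult_le: "pc_abs n (pc_mult n u v) \<le> sqrt (real n) * pc_abs n u * pc_abs n v"
proof -
  have "(\<Sum>k<n. (pc_mult n u v k)\<^sup>2) \<le> (\<Sum>k<n. (\<Sum>i<n. (u i)\<^sup>2) * (\<Sum>j<n. (v j)\<^sup>2))"
    by (intro sum_mono pc_mult_coeff_sq_le) simp
  also have "\<dots> = real n * ((\<Sum>i<n. (u i)\<^sup>2) * (\<Sum>j<n. (v j)\<^sup>2))"
    by simp
  finally have "sqrt (\<Sum>k<n. (pc_mult n u v k)\<^sup>2)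
      \<le> sqrt (real n * ((\<Sum>i<n. (u i)\<^sup>2) * (\<Sum>j<n. (v j)\<^sup>2)))"
    by (rule real_sqrt_le_mono)
  then show ?thesis
    unfolding pc_abs_def by (simp add: real_sqrt_mult mult.assoc)
qed

lemma pc_mult_one_right:
  assumes "k < n"
  shows "pc_mult n u pc_one k = u k"
proof -
  have "u i * pc_one ((n + k - i) mod n) = (if i = k then u i else 0)" if "i < n" for i
    using mod_add_eq_iff_eq_mod_diff[of i n 0 k] that assms by (auto simp: pc_one_def)
  then have "pc_mult n u pc_one k = (\<Sum>i<n. if i = k then u i else 0)"
    using assms by (simp add: pc_mult_apply)
  then show ?thesis
    using assms by simp
qed

lemma sqrt_mult_powr_half:
  fixes x :: real
  assumes "x > 0"
  shows "sqrt x * x powr (real m / 2) = x powr (real (Suc m) / 2)"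
  using assms by (simp add: powr_half_sqrt[symmetric] powr_add[symmetric] add_divide_distrib)

lemma pc_abs_pow_Suc_le:
  assumes "n > 0"
  shows "pc_abs n (pc_pow n u (Suc m)) \<le> real n powr (real m / 2) * pc_abs n u ^ Suc m"
proof (induction m)
  case 0
  have "pc_abs n (pc_pow n u (Suc 0)) = pc_abs n u"
    by (rule pc_abs_cong) (simp add: pc_mult_one_right)
  then show ?case
    using assms by simp
next
  case (Suc m)
  have "pc_abs n (pc_pow n u (Suc (Suc m))) \<le> sqrt (real n) * pc_abs n u * pc_abs n (pc_pow n u (Suc m))"
    unfolding pc_pow.simps(2)[of n u "Suc m"] by (rule pc_abs_mult_le)
  also have "\<dots> \<le> sqrt (real n) * pc_abs n u * (real n powr (real m / 2) * pc_abs n u ^ Suc m)"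
    by (intro mult_left_mono Suc.IH) (simp add: pc_abs_nonneg)
  also have "\<dots> = (sqrt (real n) * real n powr (real m / 2)) * pc_abs n u ^ Suc (Suc m)"
    by (simp only: power_Suc mult_ac)
  also have "\<dots> = real n powr (real (Suc m) / 2) * pc_abs n u ^ Suc (Suc m)"
    using assms by (simp only: sqrt_mult_powr_half of_nat_0_less_iff)
  finally show ?case .
qed

theorem mainTheorem8:
  fixes n l :: nat and u u' a :: "nat \<Rightarrow> real"
  assumes "n \<ge> 2"
  shows "pc_abs n (pc_mult n u u') \<le> sqrt (real n) * pc_abs n u * pc_abs n u'
    \<and> (l \<ge> 1 \<longrightarrow>
         pc_abs n (pc_pow n u l) \<le> real n powr ((real l - 1) / 2) * pc_abs n u ^ l
       \<and> pc_abs n (pc_mult n a (pc_pow n u l)) \<le> real n powr (real l / 2) * pc_abs n a * pc_abs n u ^ l)"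
proof (intro conjI impI pc_abs_mult_le)
  assume "l \<ge> 1"
  then obtain m where l: "l = Suc m"
    by (cases l) auto
  have n: "n > 0"
    using assms by simp
  show pow: "pc_abs n (pc_pow n u l) \<le> real n powr ((real l - 1) / 2) * pc_abs n u ^ l"
    using pc_abs_pow_Suc_le[OF n] by (simp add: l)
  have "pc_abs n (pc_mult n a (pc_pow n u l)) \<le> sqrt (real n) * pc_abs n a * pc_abs n (pc_pow n u l)"
    by (rule pc_abs_mult_le)
  also have "\<dots> \<le> sqrt (real n) * pc_abs n a * (real n powr (real m / 2) * pc_abs n u ^ l)"
    using pow by (intro mult_left_mono) (simp_all add: l pc_abs_nonneg)
  also have "\<dots> = (sqrt (real n) * real n powr (real m / 2)) * pc_abs n a * pc_abs n u ^ l"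
    by (simp only: mult_ac)
  also have "\<dots> = real n powr (real l / 2) * pc_abs n a * pc_abs n u ^ l"
    using n by (simp only: l sqrt_mult_powr_half of_nat_0_less_iff)
  finally show "pc_abs n (pc_mult n a (pc_pow n u l)) \<le> real n powr (real l / 2) * pc_abs n a * pc_abs n u ^ l" .
qed

end
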